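(* Let $p$ be a prime number, $J$ a positive integer, and $G$ a finite group. Let $\tilde A$ be a normal subgroup of $G$ of index at most $J$, and suppose $\tilde A$ is abelian (respectively, nilpotent of class at most $c$). Then $G$ contains a normal subgroup $A$ such that the minimal number of generators of $A$ does not exceed that of $\tilde A$, the order of $A$ is coprime to $p$, the index of $A$ in $G$ is at most $J\cdot|G_p|$ where $G_p$ is a $p$-Sylow subgroup of $G$, and $A$ is abelian (respectively, nilpotent of class at most $c$).
   Context: A group is nilpotent of class at most $c$ if its upper central series has length at most $c$. *)

theory Defs
  imports "HOL-Algebra.Algebra" "HOL-Computational_Algebra.Primes"
begin

definition min_gens :: "('a, 'b) monoid_scheme \<Rightarrow> 'a set \<Rightarrow> nat" where
  "min_gens G H = (LEAST n. \<exists>S. finite S \<and> S \<subseteq> H \<and> card S = n \<and> generate G S = H)"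

text \<open>Upper central series of a group K: Z_0 = 1, and Z_(i+1) is the preimage of the
  centre of K / Z_i.\<close>
fun upper_central :: "('a, 'b) monoid_scheme \<Rightarrow> nat \<Rightarrow> 'a set" where
  "upper_central K 0 = {\<one>\<^bsub>K\<^esub>}"
| "upper_central K (Suc i) =
     {x \<in> carrier K. \<forall>y \<in> carrier K.
        x \<otimes>\<^bsub>K\<^esub> y \<otimes>\<^bsub>K\<^esub> inv\<^bsub>K\<^esub> x \<otimes>\<^bsub>K\<^esub> inv\<^bsub>K\<^esub> y \<in> upper_central K i}"

definition nilpotent_class_le :: "('a, 'b) monoid_scheme \<Rightarrow> nat \<Rightarrow> bool" where
  "nilpotent_class_le K c \<longleftrightarrow> upper_central K c = carrier K"

end

theory Submission
  imports Defs
begin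

text \<open>In a finite nilpotent group every Sylow subgroup is normal, so the group is the direct
  product \<open>S \<times> H\<close> of its Sylow \<open>p\<close>-subgroup \<open>S\<close> and the product \<open>H\<close> of the others.
  Since \<open>|S|\<close> and \<open>|H|\<close> are coprime, \<open>H\<close> is the set of elements \<open>x\<close> with \<open>x\<^bsup>|H|\<^esup> = 1\<close>,
  and it is the image of the power map \<open>x \<mapsto> x\<^sup>u\<close> for a suitable \<open>u\<close>.

  Applied to the nilpotent normal subgroup \<open>\<tilde>A\<close>, this yields \<open>A = H\<close>: being defined by an
  exponent condition it is normal in \<open>G\<close>; as a homomorphic image of \<open>\<tilde>A\<close> it needs no more
  generators; its order is prime to \<open>p\<close>; its index is \<open>[G : \<tilde>A] \<cdot> |S|\<close> with \<open>|S|\<close>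
  dividing \<open>|G\<^sub>p|\<close>; and as a subgroup of \<open>\<tilde>A\<close> it inherits commutativity and the bound
  on the nilpotency class.\<close>

section \<open>Elements and subgroups of coprime order\<close>

lemma (in group) pow_eq_one_coprime_imp_one:
  assumes "x \<in> carrier G" "x [^] (a::nat) = \<one>" "x [^] (b::nat) = \<one>" "coprime a b"
  shows "x = \<one>"
proof -
  have "ord x dvd a" "ord x dvd b"
    using assms pow_eq_id by auto
  then have "ord x dvd gcd a b"
    by simp
  then have "ord x = 1"
    using assms(4) by simp
  then show ?thesis
    using assms(1) ord_eq_1 by simp
qed

lemma (in group) subgroup_pow_card_eq_one:
  assumes "subgroup H G" "finite H" "h \<in> H"
  shows "h [^] card H = \<one>"
proof -
  interpret H: group "G\<lparr>carrier := H\<rparr>"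
    using assms(1) by (rule subgroup.subgroup_is_group) (rule is_group)
  have "h [^]\<^bsub>G\<lparr>carrier := H\<rparr>\<^esub> order (G\<lparr>carrier := H\<rparr>) = \<one>"
    using H.pow_order_eq_1 assms(3) by simp
  then show ?thesis
    by (simp add: order_def nat_pow_consistent[symmetric])
qed

lemma (in group) nat_pow_conj:
  assumes "g \<in> carrier G" "x \<in> carrier G"
  shows "(g \<otimes> x \<otimes> inv g) [^] (n::nat) = g \<otimes> x [^] n \<otimes> inv g"
proof (induction n)
  case 0
  then show ?case using assms by simp
next
  case (Suc n)
  have cancel: "inv g \<otimes> (g \<otimes> y) = y" if "y \<in> carrier G" for y
    using that assms by (simp add: m_assoc[symmetric])
  have "(g \<otimes> x \<otimes> inv g) [^] Suc n = g \<otimes> x [^] n \<otimes> (inv g \<otimes> g) \<otimes> x \<otimes> inv g"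
    using Suc assms by (simp add: m_assoc cancel)
  also have "\<dots> = g \<otimes> x [^] Suc n \<otimes> inv g"
    using assms by (simp add: m_assoc nat_pow_mult[symmetric])
  finally show ?case .
qed

lemma (in group) coprime_card_subgroups_inter:
  assumes "subgroup H G" "subgroup K G" "finite H" "finite K" "coprime (card H) (card K)"
  shows "H \<inter> K \<subseteq> {\<one>}"
proof
  fix x assume x: "x \<in> H \<inter> K"
  then have "x \<in> carrier G"
    using subgroup.subset[OF assms(1)] by blast
  with x show "x \<in> {\<one>}"
    using pow_eq_one_coprime_imp_one subgroup_pow_card_eq_one assms by blast
qed

lemma (in group) card_set_mult_inter_trivial:
  assumes "subgroup H G" "subgroup K G" "H \<inter> K \<subseteq> {\<one>}" "finite H" "finite K"
  shows "card (H <#> K) = card H * card K"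
proof -
  have "inj_on (\<lambda>(h, k). h \<otimes> k) (H \<times> K)"
  proof (rule inj_onI, clarify)
    fix h k h' k' assume hk: "h \<in> H" "k \<in> K" "h' \<in> H" "k' \<in> K" "h \<otimes> k = h' \<otimes> k'"
    have carr: "h \<in> carrier G" "k \<in> carrier G" "h' \<in> carrier G" "k' \<in> carrier G"
      using hk subgroup.subset assms(1,2) by blast+
    have "h = h' \<otimes> (k' \<otimes> inv k)"
      using hk(5) carr inv_solve_right[of h "h' \<otimes> k'" k] by (simp add: m_assoc)
    then have "inv h' \<otimes> h = k' \<otimes> inv k"
      using carr by (simp add: inv_solve_left')
    moreover have "inv h' \<otimes> h \<in> H" "k' \<otimes> inv k \<in> K"
      using hk assms(1,2) by (auto intro: subgroup.m_closed subgroup.m_inv_closed)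
    ultimately have "inv h' \<otimes> h = \<one>" "k' \<otimes> inv k = \<one>"
      using assms(3) by auto
    then show "h = h' \<and> k = k'"
      using carr by (simp add: inv_solve_left' inv_solve_right')
  qed
  moreover have "H <#> K = (\<lambda>(h, k). h \<otimes> k) ` (H \<times> K)"
    unfolding set_mult_def by auto
  ultimately show ?thesis
    by (simp add: card_image card_cartesian_product)
qed

lemma (in group) normal_subgroups_inter_trivial_commute:
  assumes "H \<lhd> G" "K \<lhd> G" "H \<inter> K \<subseteq> {\<one>}" "h \<in> H" "k \<in> K"
  shows "h \<otimes> k = k \<otimes> h"
proof -
  interpret H: normal H G by fact
  interpret K: normal K G by fact
  have carr: "h \<in> carrier G" "k \<in> carrier G"
    using assms(4,5) H.subset K.subset by blast+
  define c where "c = h \<otimes> k \<otimes> inv h \<otimes> inv k"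
  have "c = h \<otimes> (k \<otimes> inv h \<otimes> inv k)"
    unfolding c_def using carr by (simp add: m_assoc)
  moreover have "k \<otimes> inv h \<otimes> inv k \<in> H"
    using H.inv_op_closed2 carr assms(4) by simp
  ultimately have "c \<in> H"
    using assms(4) by simp
  moreover have "h \<otimes> k \<otimes> inv h \<in> K"
    using K.inv_op_closed2 carr assms(5) by simp
  then have "c \<in> K"
    unfolding c_def using assms(5) by simp
  ultimately have "c = \<one>"
    using assms(3) by blast
  then have "h \<otimes> k \<otimes> inv (k \<otimes> h) = \<one>"
    unfolding c_def using carr by (simp add: m_assoc inv_mult_group)
  then show ?thesis
    using carr inv_equality[of "h \<otimes> k" "inv (k \<otimes> h)"] by simp
qed

lemma (in group) pow_coprime_index_imp_mem:
  assumes "N \<lhd> G" "t \<in> carrier G" "t [^] (k::nat) = \<one>" "coprime k (card (rcosets N))"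
  shows "t \<in> N"
proof -
  interpret N: normal N G by fact
  interpret Q: group "G Mod N"
    by (rule N.factorgroup_is_group)
  interpret \<pi>: group_hom G "G Mod N" "\<lambda>a. N #> a"
    by unfold_locales (rule N.r_coset_hom_Mod)
  have tQ: "N #> t \<in> carrier (G Mod N)"
    using assms(2) N.subset by (simp add: FactGroup_def rcosetsI)
  have "(N #> t) [^]\<^bsub>G Mod N\<^esub> k = \<one>\<^bsub>G Mod N\<^esub>"
    using \<pi>.hom_nat_pow assms(2,3) \<pi>.hom_one by metis
  moreover have "(N #> t) [^]\<^bsub>G Mod N\<^esub> card (rcosets N) = \<one>\<^bsub>G Mod N\<^esub>"
    using Q.pow_order_eq_1[OF tQ] by (simp add: order_def FactGroup_def)
  ultimately have "N #> t = \<one>\<^bsub>G Mod N\<^esub>"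
    using Q.pow_eq_one_coprime_imp_one[OF tQ] assms(4) by blast
  then have "N #> t = N"
    by simp
  then show ?thesis
    using coset_join1 assms(2) N.subgroup_axioms by blast
qed

lemma (in group) finite_normalizerI:
  assumes "finite H" "H \<subseteq> carrier G" "g \<in> carrier G" "\<And>h. h \<in> H \<Longrightarrow> g \<otimes> h \<otimes> inv g \<in> H"
  shows "g \<in> normalizer G H"
proof -
  have "inj_on (\<lambda>h. g \<otimes> h \<otimes> inv g) H"
    using assms(2,3) conjugation_is_inj by (intro inj_onI) blast
  then have "(\<lambda>h. g \<otimes> h \<otimes> inv g) ` H = H"
    using assms(1,4) by (intro endo_inj_surj) auto
  moreover have "g <# H #> inv g = (\<lambda>h. g \<otimes> h \<otimes> inv g) ` H"
    unfolding l_coset_def r_coset_def by auto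
  ultimately show ?thesis
    using assms(2,3) unfolding normalizer_def stabilizer_def by simp
qed

section \<open>Generators and nilpotency class of subgroups\<close>

lemma (in group) min_gens_hom_image_le:
  assumes A: "subgroup A G" "finite A" and f: "f \<in> hom (G\<lparr>carrier := A\<rparr>) G"
  shows "min_gens G (f ` A) \<le> min_gens G A"
proof -
  interpret A: group "G\<lparr>carrier := A\<rparr>"
    using A(1) by (rule subgroup.subgroup_is_group) (rule is_group)
  interpret f: group_hom "G\<lparr>carrier := A\<rparr>" G f
    using f by unfold_locales
  have "generate G A = A"
    using generate_subgroup_incl[OF order_refl A(1)] generate.incl[of _ A G] by blast
  then have "\<exists>n S. finite S \<and> S \<subseteq> A \<and> card S = n \<and> generate G S = A"
    using A(2) by blast
  then have "\<exists>S. finite S \<and> S \<subseteq> A \<and> card S = min_gens G A \<and> generate G S = A"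
    unfolding min_gens_def by (rule LeastI_ex)
  then obtain S where S: "finite S" "S \<subseteq> A" "card S = min_gens G A" "generate G S = A"
    by blast
  have "generate G (f ` S) = f ` generate (G\<lparr>carrier := A\<rparr>) S"
    using f.generate_img S(2) by simp
  also have "\<dots> = f ` A"
    using generate_consistent[OF S(2) A(1)] S(4) by simp
  finally have "min_gens G (f ` A) \<le> card (f ` S)"
    unfolding min_gens_def using S(1,2) by (intro Least_le) blast
  also have "\<dots> \<le> card S"
    using S(1) by (rule card_image_le)
  finally show ?thesis
    using S(3) by simp
qed

lemma (in group) upper_central_subgroup:
  assumes "subgroup H G"
  shows "upper_central G i \<inter> H \<subseteq> upper_central (G\<lparr>carrier := H\<rparr>) i"
proof (induction i)
  case 0
  then show ?case by auto
next
  case (Suc i)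
  show ?case
  proof
    fix x assume x: "x \<in> upper_central G (Suc i) \<inter> H"
    have "x \<otimes> y \<otimes> inv\<^bsub>G\<lparr>carrier := H\<rparr>\<^esub> x \<otimes> inv\<^bsub>G\<lparr>carrier := H\<rparr>\<^esub> y
            \<in> upper_central (G\<lparr>carrier := H\<rparr>) i" if y: "y \<in> H" for y
    proof -
      have "y \<in> carrier G"
        using y subgroup.subset[OF assms] by blast
      then have "x \<otimes> y \<otimes> inv x \<otimes> inv y \<in> upper_central G i \<inter> H"
        using x y assms by (auto intro: subgroup.m_closed subgroup.m_inv_closed)
      then show ?thesis
        using Suc x y m_inv_consistent[OF assms] by auto
    qed
    then show "x \<in> upper_central (G\<lparr>carrier := H\<rparr>) (Suc i)"
      using x by simp
  qed
qed

lemma (in group) nilpotent_class_le_subgroup: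
  assumes "nilpotent_class_le G c" "subgroup H G"
  shows "nilpotent_class_le (G\<lparr>carrier := H\<rparr>) c"
proof -
  have "H \<subseteq> upper_central (G\<lparr>carrier := H\<rparr>) c"
    using upper_central_subgroup[OF assms(2), of c] assms subgroup.subset
    unfolding nilpotent_class_le_def by blast
  moreover have "upper_central (G\<lparr>carrier := H\<rparr>) c \<subseteq> H"
    using subgroup.one_closed[OF assms(2)] by (cases c) auto
  ultimately show ?thesis
    unfolding nilpotent_class_le_def by simp
qed

lemma (in group) commutative_imp_nilpotent_class_le_1:
  assumes "\<And>x y. x \<in> carrier G \<Longrightarrow> y \<in> carrier G \<Longrightarrow> x \<otimes> y = y \<otimes> x"
  shows "nilpotent_class_le G 1"
proof -
  have "x \<otimes> y \<otimes> inv x \<otimes> inv y = \<one>" if "x \<in> carrier G" "y \<in> carrier G" for x y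
    using assms[OF that] that by (simp add: m_assoc)
  then have "upper_central G (Suc 0) = carrier G"
    by auto
  then show ?thesis
    unfolding nilpotent_class_le_def by simp
qed

section \<open>Sylow subgroups of finite nilpotent groups\<close>

lemma (in group) nilpotent_normalizer_condition:
  assumes "nilpotent_class_le G c" "subgroup H G" "H \<noteq> carrier G"
  obtains z where "z \<in> carrier G - H" "\<And>h. h \<in> H \<Longrightarrow> z \<otimes> h \<otimes> inv z \<in> H"
proof -
  have "\<not> upper_central G c \<subseteq> H"
    using assms subgroup.subset unfolding nilpotent_class_le_def by blast
  then obtain i where i: "\<not> upper_central G i \<subseteq> H" "\<And>j. j < i \<Longrightarrow> upper_central G j \<subseteq> H"
    using exists_least_iff[of "\<lambda>i. \<not> upper_central G i \<subseteq> H"] by blast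
  have "i \<noteq> 0"
    using i(1) subgroup.one_closed[OF assms(2)] by (auto simp del: upper_central.simps(2))
  then obtain j where j: "i = Suc j"
    using not0_implies_Suc by blast
  then obtain z where z: "z \<in> upper_central G (Suc j)" "z \<notin> H"
    using i(1) by blast
  have zc: "z \<in> carrier G"
    using z(1) by simp
  have "z \<otimes> h \<otimes> inv z \<in> H" if h: "h \<in> H" for h
  proof -
    have hc: "h \<in> carrier G"
      using h subgroup.subset[OF assms(2)] by blast
    have "z \<otimes> h \<otimes> inv z \<otimes> inv h \<in> upper_central G j"
      using z(1) hc by simp
    then have "z \<otimes> h \<otimes> inv z \<otimes> inv h \<otimes> h \<in> H"
      using i(2) j h subgroup.m_closed[OF assms(2)] by blast
    then show ?thesis
      using z(1) hc by (simp add: m_assoc)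
  qed
  then show ?thesis
    using that zc z(2) by blast
qed

lemma (in group) Sylow_coprime_index:
  assumes "finite (carrier G)" "Factorial_Ring.prime (q::nat)"
    and "subgroup S G" "card S = q ^ multiplicity q (order G)"
  shows "coprime (card S) (card (rcosets S))"
proof -
  have order: "order G = q ^ multiplicity q (order G) * card (rcosets S)"
    using lagrange[OF assms(3)] assms(4) by (simp add: mult.commute)
  have "\<not> q dvd card (rcosets S)"
  proof
    assume "q dvd card (rcosets S)"
    then have "q ^ Suc (multiplicity q (order G)) dvd order G"
      by (subst order) (simp add: mult_dvd_mono)
    moreover have "order G \<noteq> 0"
      using assms(1) order_gt_0_iff_finite by simp
    ultimately have "Suc (multiplicity q (order G)) \<le> multiplicity q (order G)"
      using assms(2) by (intro multiplicity_geI) (auto simp: not_prime_unit)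
    then show False
      by simp
  qed
  then show ?thesis
    using assms(2,4) by (simp add: prime_imp_coprime)
qed

lemma (in group) card_rcosets_tower:
  assumes fin: "finite (carrier G)" and N: "subgroup N G" and S: "subgroup S (G\<lparr>carrier := N\<rparr>)"
  shows "card (rcosets S) = card (rcosets N) * card (rcosets\<^bsub>G\<lparr>carrier := N\<rparr>\<^esub> S)"
proof -
  interpret N: group "G\<lparr>carrier := N\<rparr>"
    using N by (rule subgroup.subgroup_is_group) (rule is_group)
  have S_sub: "subgroup S G"
    using incl_subgroup[OF N S] .
  have "card (rcosets S) * card S = card (rcosets N) * card N"
    using lagrange[OF S_sub] lagrange[OF N] by simp
  also have "card N = card (rcosets\<^bsub>G\<lparr>carrier := N\<rparr>\<^esub> S) * card S"
    using N.lagrange[OF S] by (simp add: order_def)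
  moreover have "card S > 0"
    using subgroup.finite_imp_card_positive[OF S_sub fin] .
  ultimately show ?thesis
    by (simp add: mult.assoc)
qed

lemma (in group) normal_Hall_subgroup_normalizerI:
  assumes N: "subgroup N G" and S: "S \<lhd> G\<lparr>carrier := N\<rparr>" "finite S"
    and coprime: "coprime (card S) (card (rcosets\<^bsub>G\<lparr>carrier := N\<rparr>\<^esub> S))"
    and z: "z \<in> carrier G" "\<And>h. h \<in> N \<Longrightarrow> z \<otimes> h \<otimes> inv z \<in> N"
  shows "z \<in> normalizer G S"
proof -
  interpret N: group "G\<lparr>carrier := N\<rparr>"
    using N by (rule subgroup.subgroup_is_group) (rule is_group)
  have "subgroup S G"
    using incl_subgroup[OF N normal_imp_subgroup[OF S(1)]] .
  then have SN: "S \<subseteq> N" and SG: "S \<subseteq> carrier G"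
    using normal_imp_subgroup[OF S(1)] subgroup.subset by force+
  have "z \<otimes> s \<otimes> inv z \<in> S" if s: "s \<in> S" for s
  proof -
    have "(z \<otimes> s \<otimes> inv z) [^] card S = \<one>"
      using nat_pow_conj subgroup_pow_card_eq_one[OF \<open>subgroup S G\<close> S(2) s] z s SG by auto
    then have "(z \<otimes> s \<otimes> inv z) [^]\<^bsub>G\<lparr>carrier := N\<rparr>\<^esub> card S = \<one>\<^bsub>G\<lparr>carrier := N\<rparr>\<^esub>"
      by (simp add: nat_pow_consistent[symmetric])
    moreover have "z \<otimes> s \<otimes> inv z \<in> carrier (G\<lparr>carrier := N\<rparr>)"
      using z(2) s SN by auto
    ultimately show ?thesis
      using N.pow_coprime_index_imp_mem[OF S(1) _ _ coprime] by blast
  qed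
  then show ?thesis
    using finite_normalizerI[OF S(2) SG z(1)] by blast
qed

text \<open>A Sylow subgroup \<open>S\<close> is a normal Hall subgroup of its normalizer \<open>N\<close>, so whatever
  normalizes \<open>N\<close> also normalizes \<open>S\<close>; by the normalizer condition this forces \<open>N = G\<close>.\<close>

lemma (in group) nilpotent_Sylow_normal:
  assumes fin: "finite (carrier G)" and nil: "nilpotent_class_le G c"
    and q: "Factorial_Ring.prime (q::nat)"
    and S: "subgroup S G" "card S = q ^ multiplicity q (order G)"
  shows "S \<lhd> G"
proof -
  define N where "N = normalizer G S"
  have SG: "S \<subseteq> carrier G"
    using S(1) subgroup.subset by blast
  have N: "subgroup N G"
    unfolding N_def using normalizer_imp_subgroup SG by blast
  have SN: "S \<lhd> G\<lparr>carrier := N\<rparr>"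
    unfolding N_def using subgroup_in_normalizer S(1) by blast
  have "card (rcosets\<^bsub>G\<lparr>carrier := N\<rparr>\<^esub> S) dvd card (rcosets S)"
    using card_rcosets_tower[OF fin N normal_imp_subgroup[OF SN]] by simp
  then have coprime: "coprime (card S) (card (rcosets\<^bsub>G\<lparr>carrier := N\<rparr>\<^esub> S))"
    using Sylow_coprime_index[OF fin q S] by (rule coprime_divisors[OF dvd_refl])
  have "N = carrier G"
  proof (rule ccontr)
    assume "N \<noteq> carrier G"
    then obtain z where "z \<in> carrier G - N" "\<And>h. h \<in> N \<Longrightarrow> z \<otimes> h \<otimes> inv z \<in> N"
      using nilpotent_normalizer_condition[OF nil N] by blast
    moreover have "finite S"
      using fin SG finite_subset by blast
    ultimately show False
      using normal_Hall_subgroup_normalizerI[OF N SN _ coprime] unfolding N_def by blast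
  qed
  then show ?thesis
    using SN by simp
qed

lemma (in group) Sylow_subgroup_exists:
  assumes "finite (carrier G)" "Factorial_Ring.prime (q::nat)"
  obtains S where "subgroup S G" "card S = q ^ multiplicity q (order G)"
proof -
  have "order G = q ^ multiplicity q (order G) * (order G div q ^ multiplicity q (order G))"
    by (simp add: multiplicity_dvd)
  then show ?thesis
    using sylow_thm assms that by blast
qed

lemma (in group) nilpotent_normal_Sylow_subgroup_exists:
  assumes "finite (carrier G)" "nilpotent_class_le G c" "Factorial_Ring.prime (q::nat)"
  obtains S where "S \<lhd> G" "card S = q ^ multiplicity q (order G)"
  using Sylow_subgroup_exists nilpotent_Sylow_normal assms by metis

lemma (in group) nilpotent_normal_subgroup_card_prod:
  assumes fin: "finite (carrier G)" and nil: "nilpotent_class_le G c"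
    and "finite Q" "\<forall>q\<in>Q. Factorial_Ring.prime (q::nat)"
  shows "\<exists>H. H \<lhd> G \<and> card H = (\<Prod>q\<in>Q. q ^ multiplicity q (order G))"
  using assms(3,4)
proof (induction Q rule: finite_induct)
  case empty
  then show ?case
    using one_is_normal by auto
next
  case (insert q Q)
  then obtain H where H: "H \<lhd> G" "card H = (\<Prod>q\<in>Q. q ^ multiplicity q (order G))"
    by auto
  obtain S where S: "S \<lhd> G" "card S = q ^ multiplicity q (order G)"
    using nilpotent_normal_Sylow_subgroup_exists[OF fin nil] insert.prems by auto
  have subgroups: "subgroup H G" "subgroup S G"
    using H(1) S(1) normal_imp_subgroup by blast+
  then have finite: "finite H" "finite S"
    using fin subgroup.subset finite_subset by blast+
  have "coprime (r ^ multiplicity r (order G)) (q ^ multiplicity q (order G))" if "r \<in> Q" for r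
    using that insert by (auto intro: primes_coprime)
  then have "coprime (card H) (card S)"
    unfolding H(2) S(2) by (rule prod_coprime_left)
  then have "card (H <#> S) = card H * card S"
    using card_set_mult_inter_trivial coprime_card_subgroups_inter subgroups finite by simp
  then have "card (H <#> S) = (\<Prod>q\<in>insert q Q. q ^ multiplicity q (order G))"
    using H(2) S(2) insert.hyps by simp
  then show ?case
    using normal_subgroup_set_mult_closed[OF H(1) S(1)] by blast
qed

lemma prime_power_times_prod_other_prime_factors:
  fixes n p :: nat
  assumes "n > 0" "Factorial_Ring.prime p"
  shows "n = p ^ multiplicity p n * (\<Prod>q\<in>prime_factors n - {p}. q ^ multiplicity q n)"
proof (cases "p \<in> prime_factors n")
  case True
  then show ?thesis
    using prime_factorization_nat[OF assms(1)] by (simp add: prod.remove)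
next
  case False
  then have "multiplicity p n = 0"
    using assms by (simp add: in_prime_factors_iff not_dvd_imp_multiplicity_0)
  then show ?thesis
    using False prime_factorization_nat[OF assms(1)] by simp
qed

lemma (in group) nilpotent_normal_p_complement_exists:
  assumes fin: "finite (carrier G)" and nil: "nilpotent_class_le G c"
    and p: "Factorial_Ring.prime (p::nat)"
  obtains S H where "S \<lhd> G" "H \<lhd> G" "card S = p ^ multiplicity p (order G)"
    "coprime (card H) p" "card S * card H = order G"
proof -
  define Q where "Q = prime_factors (order G) - {p}"
  have "finite Q" "\<forall>q\<in>Q. Factorial_Ring.prime q"
    unfolding Q_def by auto
  then obtain H where H: "H \<lhd> G" "card H = (\<Prod>q\<in>Q. q ^ multiplicity q (order G))"
    using nilpotent_normal_subgroup_card_prod[OF fin nil] by blast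
  obtain S where S: "S \<lhd> G" "card S = p ^ multiplicity p (order G)"
    using nilpotent_normal_Sylow_subgroup_exists[OF fin nil p] by blast
  have "coprime (q ^ multiplicity q (order G)) p" if "q \<in> Q" for q
  proof -
    have "Factorial_Ring.prime q" "q \<noteq> p"
      using that unfolding Q_def by auto
    then show ?thesis
      by (simp add: p primes_coprime)
  qed
  then have "coprime (card H) p"
    unfolding H(2) by (rule prod_coprime_left)
  moreover have "card S * card H = order G"
    unfolding S(2) H(2) Q_def using fin order_gt_0_iff_finite
    by (intro prime_power_times_prod_other_prime_factors[OF _ p, symmetric]) blast
  ultimately show ?thesis
    using that H(1) S by blast
qed

section \<open>Normal \<open>p\<close>-complements\<close>

lemma (in group) normal_Hall_subgroup_eq_roots:
  assumes fin: "finite (carrier G)" and H: "H \<lhd> G"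
    and coprime: "coprime (card H) (card (rcosets H))"
  shows "H = {x \<in> carrier G. x [^] card H = \<one>}"
proof -
  have sub: "subgroup H G"
    using H normal_imp_subgroup by blast
  then have "finite H"
    using fin subgroup.subset finite_subset by blast
  then show ?thesis
    using subgroup_pow_card_eq_one[OF sub] subgroup.subset[OF sub]
      pow_coprime_index_imp_mem[OF H _ _ coprime] by blast
qed

lemma (in group) set_mult_eq_carrier:
  assumes fin: "finite (carrier G)" and "subgroup S G" "subgroup H G" "S \<inter> H \<subseteq> {\<one>}"
    and "card S * card H = order G"
  shows "S <#> H = carrier G"
proof -
  have SG: "S \<subseteq> carrier G" and HG: "H \<subseteq> carrier G"
    using assms(2,3) subgroup.subset by blast+
  moreover have "finite S" "finite H"
    using SG HG fin finite_subset by blast+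
  ultimately have "card (S <#> H) = card (carrier G)"
    using card_set_mult_inter_trivial[OF assms(2-4)] assms(5) by (simp add: order_def)
  then show ?thesis
    using card_subset_eq[OF fin setmult_subset_G[OF SG HG]] by blast
qed

lemma (in group) pow_projection_hom:
  assumes S: "subgroup S G" and H: "subgroup H G" and SH: "S <#> H = carrier G"
    and commute: "\<And>s h. s \<in> S \<Longrightarrow> h \<in> H \<Longrightarrow> s \<otimes> h = h \<otimes> s"
    and pow_S: "\<And>s. s \<in> S \<Longrightarrow> s [^] (u::nat) = \<one>"
    and pow_H: "\<And>h. h \<in> H \<Longrightarrow> h [^] u = h"
  shows "(\<lambda>x. x [^] u) \<in> hom G G"
proof (rule homI)
  fix x y assume "x \<in> carrier G" "y \<in> carrier G"
  then obtain s h s' h' where sh: "s \<in> S" "h \<in> H" "s' \<in> S" "h' \<in> H"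
    and xy: "x = s \<otimes> h" "y = s' \<otimes> h'"
    using SH unfolding set_mult_def by blast
  have carr: "s \<in> carrier G" "h \<in> carrier G" "s' \<in> carrier G" "h' \<in> carrier G"
    using sh S H subgroup.subset by blast+
  have pow_SH: "(a \<otimes> b) [^] u = b" if "a \<in> S" "b \<in> H" for a b
  proof -
    have "a \<in> carrier G" "b \<in> carrier G"
      using that S H subgroup.subset by blast+
    then show ?thesis
      using pow_mult_distrib[OF commute[OF that]] pow_S pow_H that by simp
  qed
  have "x \<otimes> y = s \<otimes> (h \<otimes> s') \<otimes> h'"
    using xy carr by (simp add: m_assoc)
  also have "\<dots> = s \<otimes> (s' \<otimes> h) \<otimes> h'"
    using commute[OF sh(3,2)] by simp
  also have "\<dots> = (s \<otimes> s') \<otimes> (h \<otimes> h')"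
    using carr by (simp add: m_assoc)
  finally show "(x \<otimes> y) [^] u = x [^] u \<otimes> y [^] u"
    using pow_SH sh xy S H by (simp add: subgroup.m_closed)
qed simp

lemma (in group) coprime_normal_complement_retraction:
  assumes fin: "finite (carrier G)" and S: "S \<lhd> G" and H: "H \<lhd> G"
    and coprime: "coprime (card S) (card H)" and order: "card S * card H = order G"
  obtains \<phi> where "\<phi> \<in> hom G G" "\<phi> ` carrier G = H" "H = {x \<in> carrier G. x [^] card H = \<one>}"
proof -
  have subgroups: "subgroup S G" "subgroup H G"
    using S H normal_imp_subgroup by blast+
  have finite: "finite S" "finite H"
    using fin subgroups subgroup.subset finite_subset by blast+
  have "card (rcosets H) * card H = card S * card H"
    using lagrange[OF subgroups(2)] order by simp
  then have "card (rcosets H) = card S"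
    using subgroup.finite_imp_card_positive[OF subgroups(2) fin] by simp
  then have H_roots: "H = {x \<in> carrier G. x [^] card H = \<one>}"
    using normal_Hall_subgroup_eq_roots[OF fin H] coprime by (simp add: ac_simps)
  have "card S \<noteq> 0"
    using subgroup.finite_imp_card_positive[OF subgroups(1) fin] by simp
  then obtain a b where "card S * a = card H * b + gcd (card S) (card H)"
    using bezout_nat by blast
  then have bezout: "card S * a = card H * b + 1"
    using coprime by simp
  \<comment> \<open>\<open>u\<close> is \<open>0\<close> modulo \<open>|S|\<close> and \<open>1\<close> modulo \<open>|H|\<close>,
    so \<open>x \<mapsto> x\<^sup>u\<close> kills \<open>S\<close> and fixes \<open>H\<close>\<close>
  define u where "u = card S * a"
  have pow_S: "s [^] u = \<one>" if "s \<in> S" for s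
    using that subgroup_pow_card_eq_one[OF subgroups(1) finite(1) that] subgroup.subset[OF subgroups(1)]
    by (auto simp: u_def nat_pow_pow[symmetric])
  have pow_H: "h [^] u = h" if "h \<in> H" for h
  proof -
    have "h \<in> carrier G" "h [^] card H = \<one>"
      using that H_roots by blast+
    then show ?thesis
      unfolding u_def bezout by (simp add: nat_pow_pow[symmetric] nat_pow_mult[symmetric])
  qed
  have pow_u: "(x [^] u) [^] card H = \<one>" if "x \<in> carrier G" for x
  proof -
    have "(x [^] u) [^] card H = (x [^] order G) [^] a"
      unfolding u_def order[symmetric] using that by (simp add: nat_pow_pow ac_simps)
    then show ?thesis
      using pow_order_eq_1[OF that] by simp
  qed
  have image: "(\<lambda>x. x [^] u) ` carrier G = H"
  proof
    show "(\<lambda>x. x [^] u) ` carrier G \<subseteq> H"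
      using pow_u by (subst H_roots) auto
    show "H \<subseteq> (\<lambda>x. x [^] u) ` carrier G"
    proof
      fix h assume "h \<in> H"
      then show "h \<in> (\<lambda>x. x [^] u) ` carrier G"
        using pow_H subgroup.subset[OF subgroups(2)] by (intro image_eqI[of h _ h]) auto
    qed
  qed
  have trivial: "S \<inter> H \<subseteq> {\<one>}"
    using coprime_card_subgroups_inter subgroups finite coprime by blast
  have hom: "(\<lambda>x. x [^] u) \<in> hom G G"
    using pow_projection_hom[OF subgroups set_mult_eq_carrier[OF fin subgroups trivial order]
        normal_subgroups_inter_trivial_commute[OF S H trivial] pow_S pow_H] .
  show ?thesis
    using that[OF hom image H_roots] .
qed

lemma (in group) nilpotent_normal_p_complement_retract:
  assumes fin: "finite (carrier G)" and nil: "nilpotent_class_le G c"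
    and p: "Factorial_Ring.prime (p::nat)"
  obtains H \<phi> where "H \<lhd> G" "coprime (card H) p" "p ^ multiplicity p (order G) * card H = order G"
    "\<phi> \<in> hom G G" "\<phi> ` carrier G = H" "H = {x \<in> carrier G. x [^] card H = \<one>}"
proof -
  obtain S H where S: "S \<lhd> G" "card S = p ^ multiplicity p (order G)"
    and H: "H \<lhd> G" "coprime (card H) p" and order: "card S * card H = order G"
    using nilpotent_normal_p_complement_exists[OF fin nil p] by blast
  have "coprime (card S) (card H)"
    using S(2) H(2) by (simp add: ac_simps)
  then obtain \<phi> where \<phi>: "\<phi> \<in> hom G G" "\<phi> ` carrier G = H"
    "H = {x \<in> carrier G. x [^] card H = \<one>}"
    using coprime_normal_complement_retraction[OF fin S(1) H(1) _ order] by blast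
  have "p ^ multiplicity p (order G) * card H = order G"
    using S(2) order by simp
  then show ?thesis
    by (rule that[OF H _ \<phi>])
qed

lemma (in group) normal_pow_eq_one_subgroup:
  assumes N: "N \<lhd> G" and H: "subgroup H G" "H = {x \<in> N. x [^] (n::nat) = \<one>}"
  shows "H \<lhd> G"
proof -
  have "x \<otimes> h \<otimes> inv x \<in> H" if x: "x \<in> carrier G" and "h \<in> H" for x h
  proof -
    have h: "h \<in> N" "h [^] n = \<one>"
      using \<open>h \<in> H\<close> H(2) by auto
    then have "h \<in> carrier G"
      using N normal_imp_subgroup subgroup.subset by blast
    then have "(x \<otimes> h \<otimes> inv x) [^] n = \<one>"
      using nat_pow_conj x h(2) by simp
    then show ?thesis
      using normal.inv_op_closed2[OF N x h(1)] H(2) by blast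
  qed
  then show ?thesis
    using normal_inv_iff H(1) by blast
qed

lemma (in group) card_rcosets_p_complement_le:
  assumes fin: "finite (carrier G)" and p: "Factorial_Ring.prime (p::nat)"
    and K: "subgroup K G" and H: "subgroup H (G\<lparr>carrier := K\<rparr>)"
    and order: "p ^ multiplicity p (card K) * card H = card K"
  shows "card (rcosets H) \<le> card (rcosets K) * p ^ multiplicity p (order G)"
proof -
  interpret K: group "G\<lparr>carrier := K\<rparr>"
    using K by (rule subgroup.subgroup_is_group) (rule is_group)
  have "card (rcosets\<^bsub>G\<lparr>carrier := K\<rparr>\<^esub> H) * card H = p ^ multiplicity p (card K) * card H"
    using K.lagrange[OF H] order by (simp add: order_def)
  then have "card (rcosets\<^bsub>G\<lparr>carrier := K\<rparr>\<^esub> H) = p ^ multiplicity p (card K)"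
    using subgroup.finite_imp_card_positive[OF incl_subgroup[OF K H] fin] by simp
  then have "card (rcosets H) = card (rcosets K) * p ^ multiplicity p (card K)"
    using card_rcosets_tower[OF fin K H] by simp
  moreover have "card K dvd order G"
    using lagrange[OF K] by (metis dvd_triv_right)
  then have "multiplicity p (card K) \<le> multiplicity p (order G)"
    using fin order_gt_0_iff_finite by (intro dvd_imp_multiplicity_le) auto
  then have "p ^ multiplicity p (card K) \<le> p ^ multiplicity p (order G)"
    using power_increasing prime_ge_1_nat[OF p] by blast
  ultimately show ?thesis
    by simp
qed

lemma (in group) nilpotent_normal_subgroup_p_complement:
  assumes fin: "finite (carrier G)" and p: "Factorial_Ring.prime (p::nat)"
    and At: "At \<lhd> G" and nil: "nilpotent_class_le (G\<lparr>carrier := At\<rparr>) c"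
  obtains A where "A \<lhd> G" "A \<subseteq> At" "min_gens G A \<le> min_gens G At" "coprime (card A) p"
    "card (rcosets A) \<le> card (rcosets At) * p ^ multiplicity p (order G)"
    "nilpotent_class_le (G\<lparr>carrier := A\<rparr>) c"
proof -
  define K where "K = G\<lparr>carrier := At\<rparr>"
  have At_sub: "subgroup At G"
    using At normal_imp_subgroup by blast
  then have finAt: "finite At"
    using fin subgroup.subset finite_subset by blast
  interpret K: group K
    unfolding K_def using At_sub by (rule subgroup.subgroup_is_group) (rule is_group)
  have finK: "finite (carrier K)" and nilK: "nilpotent_class_le K c"
    unfolding K_def using finAt nil by simp_all
  obtain H \<phi> where H: "H \<lhd> K" "coprime (card H) p"
    and order: "p ^ multiplicity p (order K) * card H = order K"
    and \<phi>: "\<phi> \<in> hom K K" "\<phi> ` carrier K = H"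
    and H_roots: "H = {x \<in> carrier K. x [^]\<^bsub>K\<^esub> card H = \<one>\<^bsub>K\<^esub>}"
    using K.nilpotent_normal_p_complement_retract[OF finK nilK p] by blast
  have card_At: "card At = order K"
    unfolding K_def order_def by simp
  have H_roots': "H = {x \<in> At. x [^] card H = \<one>}"
    using H_roots unfolding K_def by (simp add: nat_pow_consistent[symmetric])
  have H_sub: "subgroup H G"
    using incl_subgroup[OF At_sub] normal_imp_subgroup[OF H(1)] unfolding K_def by blast
  have "H \<lhd> G"
    using normal_pow_eq_one_subgroup[OF At H_sub H_roots'] .
  moreover have "H \<subseteq> At"
    using H_roots' by blast
  moreover have "min_gens G H \<le> min_gens G At"
  proof -
    have "\<phi> \<in> hom (G\<lparr>carrier := At\<rparr>) G"
      using \<phi>(1) subgroup.subset[OF At_sub] unfolding K_def hom_def by auto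
    then have "min_gens G (\<phi> ` At) \<le> min_gens G At"
      by (rule min_gens_hom_image_le[OF At_sub finAt])
    then show ?thesis
      using \<phi>(2) unfolding K_def by simp
  qed
  moreover have "card (rcosets H) \<le> card (rcosets At) * p ^ multiplicity p (order G)"
    using card_rcosets_p_complement_le[OF fin p At_sub] normal_imp_subgroup[OF H(1)] order card_At
    unfolding K_def by simp
  moreover have "nilpotent_class_le (G\<lparr>carrier := H\<rparr>) c"
    using K.nilpotent_class_le_subgroup[OF nil[folded K_def] normal_imp_subgroup[OF H(1)]]
    unfolding K_def by simp
  ultimately show ?thesis
    using that H(2) by blast
qed

theorem lemma2p5:
  fixes G :: "('a, 'b) monoid_scheme" and p J c :: nat and At :: "'a set"
  assumes "Factorial_Ring.prime p" and "J > 0"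
    and "group G" and "finite (carrier G)"
    and "At \<lhd> G" and "card (rcosets\<^bsub>G\<^esub> At) \<le> J"
  shows "((\<forall>x\<in>At. \<forall>y\<in>At. x \<otimes>\<^bsub>G\<^esub> y = y \<otimes>\<^bsub>G\<^esub> x) \<longrightarrow>
           (\<exists>A. A \<lhd> G \<and> min_gens G A \<le> min_gens G At \<and> coprime (card A) p
              \<and> card (rcosets\<^bsub>G\<^esub> A) \<le> J * p ^ multiplicity p (order G)
              \<and> (\<forall>x\<in>A. \<forall>y\<in>A. x \<otimes>\<^bsub>G\<^esub> y = y \<otimes>\<^bsub>G\<^esub> x)))
       \<and> (nilpotent_class_le (G\<lparr>carrier := At\<rparr>) c \<longrightarrow>
           (\<exists>A. A \<lhd> G \<and> min_gens G A \<le> min_gens G At \<and> coprime (card A) p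
              \<and> card (rcosets\<^bsub>G\<^esub> A) \<le> J * p ^ multiplicity p (order G)
              \<and> nilpotent_class_le (G\<lparr>carrier := A\<rparr>) c))"
proof -
  interpret group G by fact
  have p_complement: "\<exists>A. A \<lhd> G \<and> A \<subseteq> At \<and> min_gens G A \<le> min_gens G At \<and> coprime (card A) p
      \<and> card (rcosets\<^bsub>G\<^esub> A) \<le> J * p ^ multiplicity p (order G) \<and> nilpotent_class_le (G\<lparr>carrier := A\<rparr>) k"
    if nil: "nilpotent_class_le (G\<lparr>carrier := At\<rparr>) k" for k
  proof -
    obtain A where "A \<lhd> G" "A \<subseteq> At" "min_gens G A \<le> min_gens G At" "coprime (card A) p"
      "card (rcosets\<^bsub>G\<^esub> A) \<le> card (rcosets\<^bsub>G\<^esub> At) * p ^ multiplicity p (order G)"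
      "nilpotent_class_le (G\<lparr>carrier := A\<rparr>) k"
      using nilpotent_normal_subgroup_p_complement[OF assms(4,1,5) nil] by blast
    moreover have "card (rcosets\<^bsub>G\<^esub> At) * p ^ multiplicity p (order G) \<le> J * p ^ multiplicity p (order G)"
      using assms(6) by simp
    ultimately show ?thesis
      using le_trans by blast
  qed
  have "group (G\<lparr>carrier := At\<rparr>)"
    using normal_imp_subgroup[OF assms(5)] by (rule subgroup.subgroup_is_group) (rule is_group)
  then have "nilpotent_class_le (G\<lparr>carrier := At\<rparr>) 1"
    if "\<forall>x\<in>At. \<forall>y\<in>At. x \<otimes>\<^bsub>G\<^esub> y = y \<otimes>\<^bsub>G\<^esub> x"
    by (rule group.commutative_imp_nilpotent_class_le_1) (use that in simp)
  then show ?thesis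
    using p_complement[of 1] p_complement[of c] by blast
qed

end
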